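(* Let $\Gamma$ be a distance-regular graph with valency $k\geq 3$, diameter $D\geq 3$, and distinct eigenvalues $k=\theta_0>\theta_1>\cdots>\theta_D$, such that $\theta_1\leq 1$. Then $D=3$ and $\Gamma$ is isomorphic to the complete bipartite graph $K_{k+1,k+1}$ with a perfect matching removed.
   Context: All graphs are finite, simple, undirected and connected. $\Gamma$ is distance-regular with diameter $D$ if there are integers $b_i,c_i$ such that for all vertices $x,y$ with $d(x,y)=i$, $y$ has exactly $c_i$ neighbours at distance $i-1$ from $x$ and $b_i$ neighbours at distance $i+1$ from $x$; the valency is $k=b_0$. Eigenvalues are those of the adjacency matrix. *)

theory Defs
  imports Complex_Main
begin

definition simple_graph :: "'a set \<Rightarrow> ('a \<Rightarrow> 'a \<Rightarrow> bool) \<Rightarrow> bool" where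
  "simple_graph V E \<longleftrightarrow> finite V \<and> V \<noteq> {} \<and>
     (\<forall>x y. E x y \<longrightarrow> x \<in> V \<and> y \<in> V) \<and>
     (\<forall>x y. E x y \<longrightarrow> E y x) \<and> (\<forall>x. \<not> E x x)"

fun walk :: "('a \<Rightarrow> 'a \<Rightarrow> bool) \<Rightarrow> 'a \<Rightarrow> 'a \<Rightarrow> nat \<Rightarrow> bool" where
  "walk E x y 0 \<longleftrightarrow> x = y"
| "walk E x z (Suc n) \<longleftrightarrow> (\<exists>y. E x y \<and> walk E y z n)"

definition connected_graph :: "'a set \<Rightarrow> ('a \<Rightarrow> 'a \<Rightarrow> bool) \<Rightarrow> bool" where
  "connected_graph V E \<longleftrightarrow> (\<forall>x\<in>V. \<forall>y\<in>V. \<exists>n. walk E x y n)"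

definition gdist :: "('a \<Rightarrow> 'a \<Rightarrow> bool) \<Rightarrow> 'a \<Rightarrow> 'a \<Rightarrow> nat" where
  "gdist E x y = (LEAST n. walk E x y n)"

definition diameter :: "'a set \<Rightarrow> ('a \<Rightarrow> 'a \<Rightarrow> bool) \<Rightarrow> nat" where
  "diameter V E = Max {gdist E x y | x y. x \<in> V \<and> y \<in> V}"

definition distance_regular ::
  "'a set \<Rightarrow> ('a \<Rightarrow> 'a \<Rightarrow> bool) \<Rightarrow> (nat \<Rightarrow> nat) \<Rightarrow> (nat \<Rightarrow> nat) \<Rightarrow> bool" where
  "distance_regular V E b c \<longleftrightarrow> simple_graph V E \<and> connected_graph V E \<and>
     (\<forall>x\<in>V. \<forall>y\<in>V. let i = gdist E x y in
        (i \<ge> 1 \<longrightarrow> card {z\<in>V. E y z \<and> gdist E x z = i - 1} = c i) \<and>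
        card {z\<in>V. E y z \<and> gdist E x z = i + 1} = b i)"

definition adj_eigenvalue :: "'a set \<Rightarrow> ('a \<Rightarrow> 'a \<Rightarrow> bool) \<Rightarrow> real \<Rightarrow> bool" where
  "adj_eigenvalue V E \<theta> \<longleftrightarrow> (\<exists>f :: 'a \<Rightarrow> real. (\<exists>x\<in>V. f x \<noteq> 0) \<and>
       (\<forall>x\<in>V. (\<Sum>y\<in>{y\<in>V. E x y}. f y) = \<theta> * f x))"

text \<open>K_{m,m} minus a perfect matching, on vertex set {0..<m} \<times> UNIV::bool:
  (i,s) ~ (j,t) iff s \<noteq> t and i \<noteq> j.\<close>
definition crown_adj :: "nat \<times> bool \<Rightarrow> nat \<times> bool \<Rightarrow> bool" where
  "crown_adj u v \<longleftrightarrow> snd u \<noteq> snd v \<and> fst u \<noteq> fst v"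

definition graph_iso ::
  "'a set \<Rightarrow> ('a \<Rightarrow> 'a \<Rightarrow> bool) \<Rightarrow> 'b set \<Rightarrow> ('b \<Rightarrow> 'b \<Rightarrow> bool) \<Rightarrow> bool" where
  "graph_iso V E W F \<longleftrightarrow> (\<exists>f. bij_betw f V W \<and> (\<forall>x\<in>V. \<forall>y\<in>V. E x y \<longleftrightarrow> F (f x) (f y)))"

end

theory Submission
  imports Defs "HOL-Analysis.Analysis"
begin

text \<open>
  If \<open>\<theta>\<^sub>1 \<le> 1\<close>, the adjacency form \<open>g\<^sup>T A g\<close> is at most \<open>g\<^sup>T g\<close> on all vectors orthogonal to the
  all-ones vector. For vertices x, y at distance 3 we evaluate it at the test vector
  \<open>k (e\<^sub>x - e\<^sub>y) + 1\<^bsub>\<Gamma>(x)\<^esub> - 1\<^bsub>\<Gamma>(y)\<^esub>\<close>, which yields \<open>c\<^sub>2 c\<^sub>3 \<ge> k (k - 1)\<close> plus the number of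
  edges inside \<open>\<Gamma>(x)\<close> and \<open>\<Gamma>(y)\<close>. Counting neighbours of a vertex at distance 2 gives the
  reverse inequality, so \<open>c\<^sub>2 = k - 1\<close>, \<open>c\<^sub>3 = k\<close>, \<open>b\<^sub>2 = 1\<close> and the graph is triangle-free.
  Then \<open>b\<^sub>3 = 0\<close>, so the diameter is 3, the layers around a vertex have sizes 1, k, k, 1, and
  every edge changes the parity of the distance to a fixed vertex. The even layers form one
  colour class of size \<open>k + 1\<close>, and each vertex is adjacent to all vertices of the other class
  except its antipode: the graph is \<open>K\<^bsub>k+1,k+1\<^esub>\<close> minus a perfect matching.
\<close>

hide_const (open) Elementary_Metric_Spaces.diameter

lemma sum_indicator_eq_card_real: "finite A \<Longrightarrow> (\<Sum>v\<in>A. indicator S v :: real) = real (card (A \<inter> S))"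
  unfolding indicator_def by (simp add: sum.If_cases)

lemma linear_coeff_eq_0_if_nonpos:
  fixes a q :: real
  assumes "\<And>t. a * t + q * t\<^sup>2 \<le> 0"
  shows "a = 0"
proof (rule ccontr)
  assume "a \<noteq> 0"
  define s where "s = 1 / (\<bar>q\<bar> + 1)"
  have "s > 0" "1 + q * s > 0"
    unfolding s_def by (auto simp: field_simps abs_if)
  then have "a\<^sup>2 * (s * (1 + q * s)) > 0" using \<open>a \<noteq> 0\<close> by simp
  also have "\<dots> = a * (s * a) + q * (s * a)\<^sup>2"
    by (simp add: power2_eq_square algebra_simps)
  finally show False using assms[of "s * a"] by linarith
qed

lemma compactin_sum_zero_unit_sphere:
  assumes "finite V"
  shows "compactin (product_topology (\<lambda>_. euclideanreal) V)
           {h \<in> PiE V (\<lambda>_. {-1..1::real}). (\<Sum>u\<in>V. h u) = 0 \<and> (\<Sum>u\<in>V. (h u)\<^sup>2) = 1}"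
proof -
  let ?T = "product_topology (\<lambda>_::'a. euclideanreal) V"
  have "continuous_map ?T euclideanreal (\<lambda>h. \<Sum>u\<in>V. h u)"
    by (intro continuous_map_sum assms continuous_map_product_projection)
  then have "closedin ?T {h \<in> topspace ?T. (\<Sum>u\<in>V. h u) \<in> {0}}"
    by (rule closedin_continuous_map_preimage) simp
  moreover have "continuous_map ?T euclideanreal (\<lambda>h. \<Sum>u\<in>V. (h u)\<^sup>2)"
    by (intro continuous_map_sum assms continuous_map_real_pow continuous_map_product_projection)
  then have "closedin ?T {h \<in> topspace ?T. (\<Sum>u\<in>V. (h u)\<^sup>2) \<in> {1}}"
    by (rule closedin_continuous_map_preimage) simp
  moreover have "compactin ?T (PiE V (\<lambda>_. {-1..1}))"
    by (simp add: compactin_PiE)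
  ultimately have "compactin ?T ({h \<in> topspace ?T. (\<Sum>u\<in>V. h u) \<in> {0}} \<inter>
            ({h \<in> topspace ?T. (\<Sum>u\<in>V. (h u)\<^sup>2) \<in> {1}} \<inter> PiE V (\<lambda>_. {-1..1})))"
    by (intro closed_Int_compactin)
  also have "\<dots> = {h \<in> PiE V (\<lambda>_. {-1..1}). (\<Sum>u\<in>V. h u) = 0 \<and> (\<Sum>u\<in>V. (h u)\<^sup>2) = 1}"
    by (auto simp: PiE_def Pi_def)
  finally show ?thesis .
qed

lemma double_counting:
  assumes "finite A" "finite B"
  shows "(\<Sum>a\<in>A. card {b\<in>B. R a b}) = (\<Sum>b\<in>B. card {a\<in>A. R a b})"
proof -
  have "card {b\<in>B. R a b} = (\<Sum>b\<in>B. if R a b then 1 else 0)" for a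
    using assms(2) by (simp add: sum.If_cases Int_def)
  moreover have "card {a\<in>A. R a b} = (\<Sum>a\<in>A. if R a b then 1 else 0)" for b
    using assms(1) by (simp add: sum.If_cases Int_def)
  ultimately show ?thesis by (simp add: sum.swap[of _ A B])
qed

section \<open>Distances in connected simple graphs\<close>

locale connected_simple_graph =
  fixes V :: "'a set" and E :: "'a \<Rightarrow> 'a \<Rightarrow> bool"
  assumes simple: "simple_graph V E" and connected: "connected_graph V E"
begin

abbreviation d :: "'a \<Rightarrow> 'a \<Rightarrow> nat" where "d \<equiv> gdist E"

definition nbhd :: "'a \<Rightarrow> 'a set" where "nbhd u = {v\<in>V. E u v}"

lemma finite_V: "finite V" and V_nonempty: "V \<noteq> {}"
  and edge_in_V: "E x y \<Longrightarrow> x \<in> V \<and> y \<in> V"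
  and edge_sym: "E x y \<Longrightarrow> E y x" and edge_irrefl: "\<not> E x x"
  using simple unfolding simple_graph_def by blast+

lemma nbhd_subset: "nbhd u \<subseteq> V"
  unfolding nbhd_def by auto

lemma mem_nbhd_sym: "v \<in> nbhd u \<longleftrightarrow> u \<in> nbhd v"
  unfolding nbhd_def using edge_sym edge_in_V by blast

lemma finite_nbhd: "finite (nbhd u)"
  using finite_subset[OF nbhd_subset finite_V] .

lemma walk_snoc: "walk E x y n \<Longrightarrow> E y z \<Longrightarrow> walk E x z (Suc n)"
  by (induction n arbitrary: x) auto

lemma walk_sym: "walk E x y n \<Longrightarrow> walk E y x n"
proof (induction n arbitrary: x)
  case (Suc n)
  then obtain z where "E x z" "walk E z y n" by auto
  then show ?case using Suc walk_snoc edge_sym by blast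
qed simp

lemma walk_gdist: "x \<in> V \<Longrightarrow> y \<in> V \<Longrightarrow> walk E x y (d x y)"
  using connected unfolding connected_graph_def gdist_def by (metis LeastI)

lemma gdist_le_walk: "walk E x y n \<Longrightarrow> d x y \<le> n"
  unfolding gdist_def by (rule Least_le)

lemma gdist_sym: "x \<in> V \<Longrightarrow> y \<in> V \<Longrightarrow> d x y = d y x"
  by (meson antisym gdist_le_walk walk_gdist walk_sym)

lemma gdist_self [simp]: "d x x = 0"
  using gdist_le_walk[of x x 0] by simp

lemma gdist_eq_0_iff: "x \<in> V \<Longrightarrow> y \<in> V \<Longrightarrow> d x y = 0 \<longleftrightarrow> x = y"
  by (metis walk_gdist walk.simps(1) gdist_self)

lemma gdist_eq_1_iff: "x \<in> V \<Longrightarrow> y \<in> V \<Longrightarrow> d x y = 1 \<longleftrightarrow> E x y"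
proof
  assume "x \<in> V" "y \<in> V" "d x y = 1"
  then show "E x y" using walk_gdist[of x y] by simp
next
  assume "x \<in> V" "y \<in> V" "E x y"
  then have "d x y \<le> 1" "x \<noteq> y" using gdist_le_walk[of x y 1] edge_irrefl by auto
  then show "d x y = 1" using gdist_eq_0_iff \<open>x \<in> V\<close> \<open>y \<in> V\<close> by fastforce
qed

lemma gdist_edge_le: "x \<in> V \<Longrightarrow> E y z \<Longrightarrow> d x z \<le> d x y + 1"
  by (metis Suc_eq_plus1 gdist_le_walk walk_gdist edge_in_V walk_snoc)

lemma gdist_predecessor:
  assumes "x \<in> V" "z \<in> V" "d x z = Suc n"
  obtains y where "E z y" "d x y = n"
proof -
  have "walk E z x (Suc n)" using walk_gdist[OF assms(1,2)] assms(3) walk_sym by metis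
  then obtain y where y: "E z y" "walk E y x n" by auto
  have "d x y \<le> n" using gdist_le_walk[OF walk_sym[OF y(2)]] .
  moreover have "Suc n \<le> d x y + 1" using gdist_edge_le[OF assms(1) edge_sym[OF y(1)]] assms(3) by simp
  ultimately show thesis using that y by auto
qed

lemma gdist_intermediate:
  "x \<in> V \<Longrightarrow> z \<in> V \<Longrightarrow> m \<le> d x z \<Longrightarrow> \<exists>y\<in>V. d x y = m"
proof (induction "d x z" arbitrary: z)
  case (Suc n)
  show ?case
  proof (cases "m = d x z")
    case False
    obtain y where "E z y" "d x y = n" using gdist_predecessor Suc by metis
    then show ?thesis using Suc False edge_in_V by (metis le_Suc_eq)
  qed (use Suc in auto)
qed auto

lemma diameter_attained: "\<exists>x\<in>V. \<exists>y\<in>V. d x y = diameter V E"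
proof -
  have "finite {d x y | x y. x \<in> V \<and> y \<in> V}" "{d x y | x y. x \<in> V \<and> y \<in> V} \<noteq> {}"
    using finite_V V_nonempty by (auto simp: finite_image_set2)
  from Max_in[OF this] show ?thesis unfolding Defs.diameter_def by force
qed

section \<open>The adjacency form and the Rayleigh quotient\<close>

definition adj_form :: "('a \<Rightarrow> real) \<Rightarrow> ('a \<Rightarrow> real) \<Rightarrow> real" where
  "adj_form g h = (\<Sum>u\<in>V. g u * (\<Sum>v\<in>nbhd u. h v))"

lemma sum_nbhd: "(\<Sum>v\<in>nbhd u. f v) = (\<Sum>v\<in>V. if E u v then f v else 0)"
  unfolding nbhd_def using finite_V by (simp add: sum.inter_filter)

lemma adj_form_sym: "adj_form g h = adj_form h g"
proof -
  have "adj_form g h = (\<Sum>u\<in>V. \<Sum>v\<in>V. if E u v then g u * h v else 0)"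
    unfolding adj_form_def sum_nbhd by (simp add: sum_distrib_left if_distrib cong: if_cong)
  also have "\<dots> = (\<Sum>v\<in>V. \<Sum>u\<in>V. if E v u then h v * g u else 0)"
    by (subst sum.swap) (auto intro!: sum.cong dest: edge_sym)
  also have "\<dots> = adj_form h g"
    unfolding adj_form_def sum_nbhd by (simp add: sum_distrib_left if_distrib cong: if_cong)
  finally show ?thesis .
qed

lemma adj_form_add_left: "adj_form (\<lambda>v. f v + g v) h = adj_form f h + adj_form g h"
  unfolding adj_form_def by (simp add: distrib_right sum.distrib)

lemma adj_form_add_right: "adj_form h (\<lambda>v. f v + g v) = adj_form h f + adj_form h g"
  unfolding adj_form_def by (simp add: distrib_left sum.distrib)

lemma adj_form_scale_left: "adj_form (\<lambda>v. t * g v) h = t * adj_form g h"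
  unfolding adj_form_def by (simp add: sum_distrib_left mult.assoc)

lemma adj_form_scale_right: "adj_form h (\<lambda>v. t * g v) = t * adj_form h g"
  unfolding adj_form_def by (simp add: sum_distrib_left mult_ac)

lemma adj_form_restrict: "adj_form (restrict g V) (restrict h V) = adj_form g h"
proof -
  have "(\<Sum>v\<in>nbhd u. restrict h V v) = (\<Sum>v\<in>nbhd u. h v)" for u
    using nbhd_subset by (intro sum.cong) auto
  then show ?thesis unfolding adj_form_def by simp
qed

lemma adj_form_expand:
  "adj_form (\<lambda>v. h v + t * g v) (\<lambda>v. h v + t * g v)
     = adj_form h h + 2 * t * adj_form h g + t\<^sup>2 * adj_form g g"
  unfolding adj_form_add_left adj_form_add_right adj_form_scale_left adj_form_scale_right
    adj_form_sym[of g h]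
  by (simp add: algebra_simps power2_eq_square)

lemma continuous_map_adj_form:
  "continuous_map (product_topology (\<lambda>_. euclideanreal) V) euclideanreal (\<lambda>h. adj_form h h)"
  unfolding adj_form_def
  by (intro continuous_map_sum finite_V finite_nbhd continuous_map_real_mult
        continuous_map_product_projection) (use nbhd_subset in auto)

text \<open>Instead of the spectral theorem we use the variational characterisation: the maximum of the
  Rayleigh quotient over the vectors orthogonal to the constants is an eigenvalue whose eigenvector
  is orthogonal to the constants, hence (by the maximum principle) different from k.\<close>

lemma adj_form_attains_max_on_sphere:
  assumes "x0 \<in> V" "y0 \<in> V" "x0 \<noteq> y0"
  obtains h where "(\<Sum>u\<in>V. h u) = 0" "(\<Sum>u\<in>V. (h u)\<^sup>2) = 1"
    "\<And>g. (\<Sum>u\<in>V. g u) = 0 \<Longrightarrow> (\<Sum>u\<in>V. (g u)\<^sup>2) = 1 \<Longrightarrow> adj_form g g \<le> adj_form h h"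
proof -
  define K where "K = {h \<in> PiE V (\<lambda>_. {-1..1::real}). (\<Sum>u\<in>V. h u) = 0 \<and> (\<Sum>u\<in>V. (h u)\<^sup>2) = 1}"
  have "compact ((\<lambda>h. adj_form h h) ` K)"
    using image_compactin[OF compactin_sum_zero_unit_sphere[OF finite_V] continuous_map_adj_form]
    unfolding K_def by simp
  moreover
  define h0 where "h0 v = (if v = x0 then 1 / sqrt 2 else if v = y0 then - 1 / sqrt 2 else 0)" for v
  have "restrict h0 V \<in> K"
  proof -
    have "(\<Sum>u\<in>V. h0 u) = (\<Sum>u\<in>{x0,y0}. h0 u)" "(\<Sum>u\<in>V. (h0 u)\<^sup>2) = (\<Sum>u\<in>{x0,y0}. (h0 u)\<^sup>2)"
      using assms by (intro sum.mono_neutral_right finite_V; auto simp: h0_def)+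
    then have "(\<Sum>u\<in>V. h0 u) = 0" "(\<Sum>u\<in>V. (h0 u)\<^sup>2) = 1"
      using assms by (simp_all add: h0_def power_divide)
    moreover have "0 < 1 / sqrt 2" "1 / sqrt 2 \<le> (1::real)"
      by (simp_all add: divide_le_eq_1)
    then have "h0 v \<in> {-1..1}" for v
      unfolding h0_def by (simp split: if_split; linarith)
    ultimately show ?thesis
      unfolding K_def by auto
  qed
  then have "(\<lambda>h. adj_form h h) ` K \<noteq> {}" by blast
  ultimately obtain h where "h \<in> K" and h_max: "\<And>g. g \<in> K \<Longrightarrow> adj_form g g \<le> adj_form h h"
    using compact_attains_sup[of "(\<lambda>h. adj_form h h) ` K"] by auto
  show thesis
  proof (rule that)
    show "(\<Sum>u\<in>V. h u) = 0" "(\<Sum>u\<in>V. (h u)\<^sup>2) = 1" using \<open>h \<in> K\<close> unfolding K_def by auto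
  next
    fix g :: "'a \<Rightarrow> real" assume g: "(\<Sum>u\<in>V. g u) = 0" "(\<Sum>u\<in>V. (g u)\<^sup>2) = 1"
    have "(g v)\<^sup>2 \<le> 1" if "v \<in> V" for v
      using g(2) member_le_sum[OF that, of "\<lambda>u. (g u)\<^sup>2"] finite_V by simp
    then have "restrict g V \<in> K"
      using g unfolding K_def by (auto simp: abs_square_le_1 abs_le_iff)
    then show "adj_form g g \<le> adj_form h h"
      using h_max adj_form_restrict by metis
  qed
qed

lemma adj_form_eq_0_if_vanishing: "(\<And>v. v \<in> V \<Longrightarrow> g v = 0) \<Longrightarrow> adj_form g g = 0"
  unfolding adj_form_def by simp

lemma rayleigh_maximizer_exists:
  assumes "x0 \<in> V" "y0 \<in> V" "x0 \<noteq> y0"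
  obtains h where "(\<Sum>u\<in>V. h u) = 0" "(\<Sum>u\<in>V. (h u)\<^sup>2) = 1"
    "\<And>g. (\<Sum>u\<in>V. g u) = 0 \<Longrightarrow> adj_form g g \<le> adj_form h h * (\<Sum>u\<in>V. (g u)\<^sup>2)"
proof -
  obtain h where h: "(\<Sum>u\<in>V. h u) = 0" "(\<Sum>u\<in>V. (h u)\<^sup>2) = 1"
    and h_max: "\<And>g. (\<Sum>u\<in>V. g u) = 0 \<Longrightarrow> (\<Sum>u\<in>V. (g u)\<^sup>2) = 1 \<Longrightarrow> adj_form g g \<le> adj_form h h"
    using adj_form_attains_max_on_sphere[OF assms] by blast
  have "adj_form g g \<le> adj_form h h * (\<Sum>u\<in>V. (g u)\<^sup>2)" if g: "(\<Sum>u\<in>V. g u) = 0" for g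
  proof (cases "\<forall>v\<in>V. g v = 0")
    case True
    then show ?thesis using adj_form_eq_0_if_vanishing by simp
  next
    case False
    define S where "S = (\<Sum>u\<in>V. (g u)\<^sup>2)"
    from False obtain v where "v \<in> V" "g v \<noteq> 0" by auto
    then have "S > 0"
      unfolding S_def by (intro sum_pos2[OF finite_V]) auto
    define t where "t = 1 / sqrt S"
    have t2: "t\<^sup>2 * S = 1" unfolding t_def using \<open>S > 0\<close> by (simp add: power_divide)
    have "(\<Sum>u\<in>V. t * g u) = 0" "(\<Sum>u\<in>V. (t * g u)\<^sup>2) = 1"
      using g t2 by (simp_all add: sum_distrib_left[symmetric] power_mult_distrib S_def)
    then have "t\<^sup>2 * adj_form g g \<le> adj_form h h"
      using h_max[of "\<lambda>v. t * g v"] by (simp add: adj_form_scale_left adj_form_scale_right power2_eq_square)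
    have "adj_form g g = t\<^sup>2 * adj_form g g * S"
      using t2 by (simp add: mult.commute mult.left_commute)
    also have "\<dots> \<le> adj_form h h * S"
      using \<open>t\<^sup>2 * adj_form g g \<le> adj_form h h\<close> \<open>S > 0\<close> by (simp add: mult_right_mono)
    finally show ?thesis unfolding S_def .
  qed
  with h show thesis using that by blast
qed

lemma rayleigh_maximizer_stationary:
  assumes h: "(\<Sum>u\<in>V. h u) = 0" "(\<Sum>u\<in>V. (h u)\<^sup>2) = 1"
    and h_max: "\<And>g. (\<Sum>u\<in>V. g u) = 0 \<Longrightarrow> adj_form g g \<le> adj_form h h * (\<Sum>u\<in>V. (g u)\<^sup>2)"
    and g: "(\<Sum>u\<in>V. g u) = 0"
  shows "adj_form h g = adj_form h h * (\<Sum>u\<in>V. h u * g u)"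
proof -
  let ?lam = "adj_form h h"
  have "2 * (adj_form h g - ?lam * (\<Sum>u\<in>V. h u * g u)) * t
          + (adj_form g g - ?lam * (\<Sum>u\<in>V. (g u)\<^sup>2)) * t\<^sup>2 \<le> 0" for t
  proof -
    have "(\<Sum>u\<in>V. h u + t * g u) = 0"
      using g h by (simp add: sum.distrib sum_distrib_left[symmetric])
    from h_max[OF this]
    have "adj_form (\<lambda>v. h v + t * g v) (\<lambda>v. h v + t * g v) \<le> ?lam * (\<Sum>u\<in>V. (h u + t * g u)\<^sup>2)" .
    moreover have "(\<Sum>u\<in>V. (h u + t * g u)\<^sup>2)
        = 1 + 2 * t * (\<Sum>u\<in>V. h u * g u) + t\<^sup>2 * (\<Sum>u\<in>V. (g u)\<^sup>2)"
      using h by (simp add: power2_sum sum.distrib sum_distrib_left algebra_simps power_mult_distrib)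
    ultimately show ?thesis
      unfolding adj_form_expand by (simp add: algebra_simps)
  qed
  from linear_coeff_eq_0_if_nonpos[OF this] show ?thesis by simp
qed

end

locale regular_graph = connected_simple_graph +
  fixes k :: nat
  assumes card_nbhd: "u \<in> V \<Longrightarrow> card (nbhd u) = k"
begin

lemma adj_form_const_right: "adj_form h (\<lambda>_. 1) = real k * (\<Sum>u\<in>V. h u)"
  unfolding adj_form_def using card_nbhd by (simp add: sum_distrib_left mult.commute)

lemma rayleigh_maximizer_eigenvector:
  assumes h: "(\<Sum>u\<in>V. h u) = 0" "(\<Sum>u\<in>V. (h u)\<^sup>2) = 1"
    and h_max: "\<And>g. (\<Sum>u\<in>V. g u) = 0 \<Longrightarrow> adj_form g g \<le> adj_form h h * (\<Sum>u\<in>V. (g u)\<^sup>2)"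
    and "x \<in> V"
  shows "(\<Sum>v\<in>nbhd x. h v) = adj_form h h * h x"
proof -
  let ?lam = "adj_form h h"
  define r where "r x = (\<Sum>v\<in>nbhd x. h v) - ?lam * h x" for x
  have delta: "(\<Sum>v\<in>V. (if v = u then 1 else 0) * F v) = (F u :: real)" if "u \<in> V" for u F
  proof -
    have "(\<Sum>v\<in>V. (if v = u then 1 else 0) * F v) = (\<Sum>v\<in>V. if v = u then F v else 0)"
      by (rule sum.cong) auto
    then show ?thesis using finite_V that by simp
  qed
  have r_const: "r u = r w" if "u \<in> V" "w \<in> V" for u w
  proof -
    define g where "g v = (if v = u then 1 else 0) - (if v = w then 1 else 0 :: real)" for v
    have "(\<Sum>v\<in>V. g v) = 0" unfolding g_def using that finite_V by (simp add: sum_subtractf)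
    from rayleigh_maximizer_stationary[OF h h_max this]
    have "adj_form g h = ?lam * (\<Sum>v\<in>V. g v * h v)"
      by (simp add: adj_form_sym mult.commute)
    then show ?thesis
      unfolding r_def adj_form_def g_def using that
      by (simp add: left_diff_distrib sum_subtractf delta right_diff_distrib)
  qed
  have "(\<Sum>x\<in>V. r x) = adj_form (\<lambda>_. 1) h - ?lam * (\<Sum>x\<in>V. h x)"
    unfolding r_def adj_form_def by (simp add: sum_subtractf sum_distrib_left)
  also have "\<dots> = 0"
    using adj_form_sym[of "\<lambda>_. 1" h] adj_form_const_right[of h] h by simp
  finally have "(\<Sum>y\<in>V. r x) = 0"
    using r_const[OF _ \<open>x \<in> V\<close>] by (metis (no_types, lifting) sum.cong)
  then have "r x = 0"
    using finite_V \<open>x \<in> V\<close> by (auto simp: card_gt_0_iff)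
  then show ?thesis unfolding r_def by simp
qed

lemma degree_eigenvector_sum_zero:
  assumes ev: "\<And>x. x \<in> V \<Longrightarrow> (\<Sum>v\<in>nbhd x. h v) = real k * h x"
    and sum_zero: "(\<Sum>u\<in>V. h u) = 0" and "x \<in> V"
  shows "h x = 0"
proof -
  define m where "m = Max (h ` V)"
  have h_le: "h v \<le> m" if "v \<in> V" for v
    unfolding m_def using finite_V that by simp
  have "m \<in> h ` V"
    unfolding m_def using finite_V V_nonempty by (intro Max_in) auto
  then obtain x1 where "x1 \<in> V" "h x1 = m" by auto
  \<comment> \<open>h is the average of its values on a neighbourhood, so the maximum spreads along edges\<close>
  have max_spreads: "h w = m" if "v \<in> V" "h v = m" "E v w" for v w
  proof -
    have "(\<Sum>u\<in>nbhd v. m - h u) = 0"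
      using ev[OF \<open>v \<in> V\<close>] card_nbhd[OF \<open>v \<in> V\<close>] that(2) by (simp add: sum_subtractf)
    moreover have "w \<in> nbhd v" using that edge_in_V unfolding nbhd_def by auto
    ultimately show ?thesis
      using sum_nonneg_eq_0_iff[OF finite_nbhd[of v], of "\<lambda>u. m - h u"] h_le nbhd_subset by force
  qed
  have "h y = m" if "walk E x1 y n" for y n
    using that \<open>x1 \<in> V\<close> \<open>h x1 = m\<close>
  proof (induction n arbitrary: x1)
    case (Suc n)
    then obtain z where "E x1 z" "walk E z y n" by auto
    then show ?case using Suc max_spreads edge_in_V by blast
  qed simp
  then have const: "h y = m" if "y \<in> V" for y
    using connected \<open>x1 \<in> V\<close> that unfolding connected_graph_def by blast
  then have "real (card V) * m = 0" using sum_zero by simp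
  then have "m = 0" using finite_V V_nonempty by (simp add: card_gt_0_iff)
  then show ?thesis using const \<open>x \<in> V\<close> by simp
qed

lemma adj_form_le_if_nontrivial_eigenvalues_le:
  assumes eig: "\<And>l. adj_eigenvalue V E l \<Longrightarrow> l = real k \<or> l \<le> r"
    and g: "(\<Sum>u\<in>V. g u) = 0"
  shows "adj_form g g \<le> r * (\<Sum>u\<in>V. (g u)\<^sup>2)"
proof (cases "\<exists>x0\<in>V. \<exists>y0\<in>V. x0 \<noteq> y0")
  case True
  then obtain h where h: "(\<Sum>u\<in>V. h u) = 0" "(\<Sum>u\<in>V. (h u)\<^sup>2) = 1"
    and h_max: "\<And>g. (\<Sum>u\<in>V. g u) = 0 \<Longrightarrow> adj_form g g \<le> adj_form h h * (\<Sum>u\<in>V. (g u)\<^sup>2)"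
    using rayleigh_maximizer_exists by metis
  let ?lam = "adj_form h h"
  have ev: "(\<Sum>v\<in>nbhd x. h v) = ?lam * h x" if "x \<in> V" for x
    using rayleigh_maximizer_eigenvector[OF h h_max that] .
  have nonzero: "\<exists>x\<in>V. h x \<noteq> 0"
    using h(2) by (metis (no_types, lifting) sum.neutral zero_neq_one zero_power2)
  then have "adj_eigenvalue V E ?lam"
    unfolding adj_eigenvalue_def using ev unfolding nbhd_def by blast
  moreover have "?lam \<noteq> real k"
    using degree_eigenvector_sum_zero[OF _ h(1)] ev nonzero by metis
  ultimately have "?lam \<le> r" using eig by blast
  then have "?lam * (\<Sum>u\<in>V. (g u)\<^sup>2) \<le> r * (\<Sum>u\<in>V. (g u)\<^sup>2)"
    by (intro mult_right_mono sum_nonneg) auto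
  then show ?thesis using h_max[OF g] by linarith
next
  case False
  then obtain x where "V = {x}" using V_nonempty by blast
  then have "g x = 0" using g by simp
  then show ?thesis using adj_form_eq_0_if_vanishing \<open>V = {x}\<close> by simp
qed

end

section \<open>Distance-regular graphs\<close>

locale distance_regular_graph =
  fixes V :: "'a set" and E :: "'a \<Rightarrow> 'a \<Rightarrow> bool" and b c :: "nat \<Rightarrow> nat"
  assumes distance_regular: "distance_regular V E b c"

sublocale distance_regular_graph \<subseteq> connected_simple_graph
  using distance_regular unfolding distance_regular_def by unfold_locales auto

context distance_regular_graph
begin

abbreviation k :: nat where "k \<equiv> b 0"

lemma card_nbhd_closer:
  "x \<in> V \<Longrightarrow> y \<in> V \<Longrightarrow> 1 \<le> d x y \<Longrightarrow> card {z\<in>V. E y z \<and> d x z = d x y - 1} = c (d x y)"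
  using distance_regular unfolding distance_regular_def Let_def by blast

lemma card_nbhd_farther:
  "x \<in> V \<Longrightarrow> y \<in> V \<Longrightarrow> card {z\<in>V. E y z \<and> d x z = d x y + 1} = b (d x y)"
  using distance_regular unfolding distance_regular_def Let_def by blast

lemma card_nbhd_eq_k: "u \<in> V \<Longrightarrow> card (nbhd u) = k"
proof -
  assume "u \<in> V"
  then have "nbhd u = {z\<in>V. E u z \<and> d u z = d u u + 1}"
    unfolding nbhd_def using gdist_eq_1_iff by auto
  then show ?thesis using card_nbhd_farther[OF \<open>u \<in> V\<close> \<open>u \<in> V\<close>] by simp
qed

end

sublocale distance_regular_graph \<subseteq> regular_graph V E k
  by unfold_locales (rule card_nbhd_eq_k)

context distance_regular_graph
begin

lemma card_nbhd_restrict_le: "u \<in> V \<Longrightarrow> card {z\<in>V. E u z \<and> P z} \<le> k"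
  using card_mono[OF finite_nbhd[of u], of "{z\<in>V. E u z \<and> P z}"] card_nbhd unfolding nbhd_def by auto

lemma b_pos_if_farther_neighbour:
  assumes "x \<in> V" "y \<in> V" "E y z" "d x z = d x y + 1"
  shows "1 \<le> b (d x y)"
proof -
  have "z \<in> {z\<in>V. E y z \<and> d x z = d x y + 1}" using assms edge_in_V by auto
  moreover have "finite {z\<in>V. E y z \<and> d x z = d x y + 1}" using finite_V by simp
  ultimately have "card {z\<in>V. E y z \<and> d x z = d x y + 1} > 0" by (auto simp: card_gt_0_iff)
  then show ?thesis using card_nbhd_farther[OF assms(1,2)] by simp
qed

lemma farther_neighbour_exists:
  assumes "x \<in> V" "y \<in> V" "1 \<le> b (d x y)"
  shows "\<exists>z\<in>V. E y z \<and> d x z = d x y + 1"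
proof -
  have "card {z\<in>V. E y z \<and> d x z = d x y + 1} \<noteq> 0"
    using card_nbhd_farther[OF assms(1,2)] assms(3) by simp
  then have "{z\<in>V. E y z \<and> d x z = d x y + 1} \<noteq> {}" by (metis card.empty)
  then show ?thesis by blast
qed

lemma intersection_numbers_sum:
  assumes "x \<in> V" "w \<in> V" "1 \<le> d x w"
  shows "c (d x w) + card {z\<in>V. E w z \<and> d x z = d x w} + b (d x w) = k"
proof -
  let ?layer = "\<lambda>i. {z\<in>V. E w z \<and> d x z = i}"
  have "d x z \<in> {d x w - 1, d x w, d x w + 1}" if "E w z" for z
    using gdist_edge_le[OF assms(1) that] gdist_edge_le[OF assms(1) edge_sym[OF that]] by auto
  then have "nbhd w = ?layer (d x w - 1) \<union> ?layer (d x w) \<union> ?layer (d x w + 1)"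
    unfolding nbhd_def by auto
  moreover have "finite (?layer i)" for i using finite_V by simp
  moreover have "?layer (d x w - 1) \<inter> ?layer (d x w) = {}"
    "(?layer (d x w - 1) \<union> ?layer (d x w)) \<inter> ?layer (d x w + 1) = {}"
    using assms(3) by auto
  ultimately have "card (nbhd w) = card (?layer (d x w - 1)) + card (?layer (d x w)) + card (?layer (d x w + 1))"
    by (simp add: card_Un_disjoint)
  also have "card (?layer (d x w - 1)) = c (d x w)"
    using card_nbhd_closer[OF assms] .
  also have "card (?layer (d x w + 1)) = b (d x w)"
    using card_nbhd_farther[OF assms(1,2)] .
  finally show ?thesis
    using card_nbhd[OF assms(2)] by (simp only: ac_simps)
qed

lemma sum_common_neighbours_dist_3:
  assumes "x \<in> V" "y \<in> V" "d x y = 3"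
  shows "(\<Sum>u\<in>nbhd y. real (card (nbhd u \<inter> nbhd x))) = real (c 2 * c 3)"
proof -
  have each: "card (nbhd u \<inter> nbhd x) = (if d x u = 2 then c 2 else 0)" if "u \<in> nbhd y" for u
  proof -
    have u: "u \<in> V" "E y u" using that unfolding nbhd_def by auto
    have "2 \<le> d x u" using gdist_edge_le[OF assms(1) edge_sym[OF u(2)]] assms(3) by simp
    have common: "nbhd u \<inter> nbhd x = {z\<in>V. E u z \<and> d x z = 1}"
      using gdist_eq_1_iff[OF assms(1)] edge_sym unfolding nbhd_def by auto
    show ?thesis
    proof (cases "d x u = 2")
      case True
      then show ?thesis using common card_nbhd_closer[OF assms(1) u(1)] by simp
    next
      case False
      have "d x u \<le> 2" if "E u z" "d x z = 1" for z
        using gdist_edge_le[OF assms(1) edge_sym[OF that(1)]] that(2) by simp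
      then have "nbhd u \<inter> nbhd x = {}" using common False \<open>2 \<le> d x u\<close> by fastforce
      then show ?thesis using False by simp
    qed
  qed
  have "(\<Sum>u\<in>nbhd y. real (card (nbhd u \<inter> nbhd x))) = (\<Sum>u\<in>nbhd y. if d x u = 2 then real (c 2) else 0)"
    by (rule sum.cong) (auto simp: each)
  also have "\<dots> = real (c 2) * real (card {u\<in>nbhd y. d x u = 2})"
    using finite_nbhd by (simp add: sum.If_cases Int_def)
  also have "{u\<in>nbhd y. d x u = 2} = {z\<in>V. E y z \<and> d x z = d x y - 1}"
    using assms unfolding nbhd_def by auto
  also have "card \<dots> = c 3" using card_nbhd_closer[OF assms(1,2)] assms(3) by simp
  finally show ?thesis by simp
qed

lemma intersection_number_bounds_dist_3:
  assumes xV: "x \<in> V" and yV: "y \<in> V" and dxy: "d x y = 3"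
  shows "c 3 \<le> k" "1 \<le> b 2" "c 2 + b 2 \<le> k"
proof -
  show "c 3 \<le> k"
    using card_nbhd_closer[OF xV yV] card_nbhd_restrict_le[OF yV, of "\<lambda>z. d x z = 2"] dxy by simp
  have "d x y = Suc 2" using dxy by simp
  then obtain w where w: "E y w" "d x w = 2"
    using gdist_predecessor[OF xV yV] by blast
  have wV: "w \<in> V" using w edge_in_V by blast
  show "1 \<le> b 2"
    using b_pos_if_farther_neighbour[OF xV wV edge_sym[OF w(1)]] w dxy by simp
  show "c 2 + b 2 \<le> k"
    using intersection_numbers_sum[OF xV wV] w by simp
qed

lemma nbhds_of_dist_3:
  assumes "x \<in> V" "y \<in> V" "d x y = 3"
  shows "x \<notin> nbhd y" "y \<notin> nbhd x" "nbhd x \<inter> nbhd y = {}"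
proof -
  show "x \<notin> nbhd y" "y \<notin> nbhd x"
    using gdist_eq_1_iff[OF assms(1,2)] gdist_sym[OF assms(1,2)] edge_sym assms(3)
    unfolding nbhd_def by auto
  have False if "E x z" "E y z" for z
    using gdist_edge_le[OF assms(1) edge_sym[OF that(2)]] gdist_eq_1_iff[OF assms(1)] that edge_in_V assms(3)
    by force
  then show "nbhd x \<inter> nbhd y = {}" unfolding nbhd_def by auto
qed

definition test_vector :: "'a \<Rightarrow> 'a \<Rightarrow> 'a \<Rightarrow> real" where
  "test_vector x y v = real k * indicator {x} v - real k * indicator {y} v
                       + indicator (nbhd x) v - indicator (nbhd y) v"

lemma sum_test_vector:
  assumes "x \<in> V" "y \<in> V" "d x y = 3"
  shows "(\<Sum>u\<in>V. test_vector x y u) = 0"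
proof -
  have "V \<inter> {x} = {x}" "V \<inter> {y} = {y}" "V \<inter> nbhd x = nbhd x" "V \<inter> nbhd y = nbhd y"
    using assms nbhd_subset by auto
  then show ?thesis
    unfolding test_vector_def using card_nbhd[OF assms(1)] card_nbhd[OF assms(2)]
    by (simp add: sum.distrib sum_subtractf sum_distrib_left[symmetric] finite_V sum_indicator_eq_card_real)
qed

lemma sum_squares_test_vector:
  assumes "x \<in> V" "y \<in> V" "d x y = 3"
  shows "(\<Sum>u\<in>V. (test_vector x y u)\<^sup>2) = 2 * real k ^ 2 + 2 * real k"
proof -
  have "V \<inter> {x} = {x}" "V \<inter> {y} = {y}" "V \<inter> nbhd x = nbhd x" "V \<inter> nbhd y = nbhd y"
    using assms nbhd_subset by auto
  moreover have "(test_vector x y u)\<^sup>2 = real k ^ 2 * indicator {x} u + real k ^ 2 * indicator {y} u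
                    + indicator (nbhd x) u + indicator (nbhd y) u" for u
    unfolding test_vector_def using nbhds_of_dist_3[OF assms] assms(3) edge_irrefl
    by (auto simp: indicator_def power2_eq_square nbhd_def)
  ultimately show ?thesis using card_nbhd[OF assms(1)] card_nbhd[OF assms(2)]
    by (simp add: sum.distrib sum_distrib_left[symmetric] finite_V sum_indicator_eq_card_real)
qed

lemma sum_nbhd_test_vector:
  "(\<Sum>v\<in>nbhd u. test_vector x y v) = real k * card (nbhd u \<inter> {x}) - real k * card (nbhd u \<inter> {y})
     + card (nbhd u \<inter> nbhd x) - card (nbhd u \<inter> nbhd y)"
  unfolding test_vector_def using finite_nbhd
  by (simp add: sum.distrib sum_subtractf sum_distrib_left[symmetric] sum_indicator_eq_card_real)

lemma test_vector_swap: "test_vector y x v = - test_vector x y v"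
  unfolding test_vector_def by simp

lemma sum_nbhd_sum_nbhd_test_vector:
  assumes "x \<in> V" "y \<in> V" "d x y = 3"
  shows "(\<Sum>u\<in>nbhd x. \<Sum>v\<in>nbhd u. test_vector x y v)
    = real k * real k + (\<Sum>u\<in>nbhd x. real (card (nbhd u \<inter> nbhd x))) - real (c 2 * c 3)"
proof -
  have "nbhd u \<inter> {x} = {x}" "nbhd u \<inter> {y} = {}" if "u \<in> nbhd x" for u
    using that nbhds_of_dist_3[OF assms] mem_nbhd_sym by blast+
  moreover have "d y x = 3" using gdist_sym[OF assms(1,2)] assms(3) by simp
  ultimately show ?thesis
    unfolding sum_nbhd_test_vector
    using card_nbhd[OF assms(1)] sum_common_neighbours_dist_3[OF assms(2,1)]
    by (simp add: sum.distrib sum_subtractf)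
qed

lemma adj_form_test_vector:
  assumes xV: "x \<in> V" and yV: "y \<in> V" and dxy: "d x y = 3"
  shows "adj_form (test_vector x y) (test_vector x y)
    = 4 * real k ^ 2 - 2 * real (c 2 * c 3)
      + (\<Sum>u\<in>nbhd x. real (card (nbhd u \<inter> nbhd x))) + (\<Sum>u\<in>nbhd y. real (card (nbhd u \<inter> nbhd y)))"
proof -
  have dyx: "d y x = 3" using gdist_sym[OF xV yV] dxy by simp
  have self_notin: "x \<notin> nbhd x" "y \<notin> nbhd y" using edge_irrefl unfolding nbhd_def by auto
  define Af where "Af u = (\<Sum>v\<in>nbhd u. test_vector x y v)" for u
  have V_inter: "V \<inter> {x} = {x}" "V \<inter> {y} = {y}" "V \<inter> nbhd x = nbhd x" "V \<inter> nbhd y = nbhd y"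
    using xV yV nbhd_subset by auto
  have "adj_form (test_vector x y) (test_vector x y) = (\<Sum>u\<in>V. test_vector x y u * Af u)"
    unfolding adj_form_def Af_def ..
  also have "\<dots> = real k * (\<Sum>u\<in>V. indicator {x} u * Af u) - real k * (\<Sum>u\<in>V. indicator {y} u * Af u)
         + (\<Sum>u\<in>V. indicator (nbhd x) u * Af u) - (\<Sum>u\<in>V. indicator (nbhd y) u * Af u)"
    unfolding test_vector_def by (simp add: algebra_simps sum.distrib sum_subtractf sum_distrib_left)
  also have "\<dots> = real k * Af x - real k * Af y + (\<Sum>u\<in>nbhd x. Af u) - (\<Sum>u\<in>nbhd y. Af u)"
    by (simp only: Indicator_Function.sum_indicator_mult[OF finite_V] V_inter sum.insert_if
          sum.empty finite.emptyI empty_iff if_False add_0_right)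
  finally have "adj_form (test_vector x y) (test_vector x y)
      = real k * Af x - real k * Af y + (\<Sum>u\<in>nbhd x. Af u) - (\<Sum>u\<in>nbhd y. Af u)" .
  moreover have "Af x = real k" "Af y = - real k"
    unfolding Af_def sum_nbhd_test_vector using nbhds_of_dist_3[OF assms] self_notin
      card_nbhd[OF xV] card_nbhd[OF yV]
    by (simp_all add: Int_absorb Int_commute)
  moreover have "(\<Sum>u\<in>nbhd y. Af u) = - (\<Sum>u\<in>nbhd y. \<Sum>v\<in>nbhd u. test_vector y x v)"
    unfolding Af_def by (simp add: test_vector_swap[of x y] sum_negf)
  ultimately show ?thesis
    unfolding Af_def sum_nbhd_sum_nbhd_test_vector[OF assms] sum_nbhd_sum_nbhd_test_vector[OF yV xV dyx]
    by (simp add: power2_eq_square algebra_simps)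
qed

definition layer :: "'a \<Rightarrow> nat \<Rightarrow> 'a set" where
  "layer x i = {v\<in>V. d x v = i}"

lemma finite_layer: "finite (layer x i)"
  unfolding layer_def using finite_V by simp

lemma card_layer_mult_b:
  assumes "x \<in> V"
  shows "card (layer x i) * b i = card (layer x (Suc i)) * c (Suc i)"
proof -
  have "card {w\<in>layer x (Suc i). E u w} = b i" if "u \<in> layer x i" for u
  proof -
    have "{w\<in>layer x (Suc i). E u w} = {z\<in>V. E u z \<and> d x z = d x u + 1}"
      using that unfolding layer_def by auto
    then show ?thesis using card_nbhd_farther[OF assms] that unfolding layer_def by auto
  qed
  moreover have "card {u\<in>layer x i. E u w} = c (Suc i)" if "w \<in> layer x (Suc i)" for w
  proof -
    have "{u\<in>layer x i. E u w} = {z\<in>V. E w z \<and> d x z = d x w - 1}"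
      using that edge_sym unfolding layer_def by auto
    then show ?thesis using card_nbhd_closer[OF assms, of w] that unfolding layer_def by auto
  qed
  ultimately show ?thesis
    using double_counting[where A = "layer x i" and B = "layer x (Suc i)" and R = E, OF finite_layer finite_layer] by simp
qed

lemma c1_eq:
  assumes "E x u"
  shows "c 1 = 1"
proof -
  have V: "x \<in> V" "u \<in> V" and "d x u = 1" using assms edge_in_V gdist_eq_1_iff by auto
  then have "{z\<in>V. E u z \<and> d x z = d x u - 1} = {x}"
    using assms edge_sym gdist_eq_0_iff by auto
  then show ?thesis using card_nbhd_closer[OF V] \<open>d x u = 1\<close> by simp
qed

end

text \<open>Here P is one colour class of a bipartite graph and \<sigma> pairs every vertex with its unique
  non-neighbour in the other class.\<close>

lemma graph_iso_crown_adjI: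
  assumes g: "bij_betw g P {0..n}" and "P \<subseteq> V"
    and \<sigma>_V: "\<And>v. v \<in> V \<Longrightarrow> \<sigma> v \<in> V" and \<sigma>_\<sigma>: "\<And>v. v \<in> V \<Longrightarrow> \<sigma> (\<sigma> v) = v"
    and \<sigma>_P: "\<And>v. v \<in> V \<Longrightarrow> \<sigma> v \<in> P \<longleftrightarrow> v \<notin> P"
    and adj: "\<And>u w. u \<in> V \<Longrightarrow> w \<in> V \<Longrightarrow> E u w \<longleftrightarrow> (u \<in> P \<longleftrightarrow> w \<notin> P) \<and> u \<noteq> \<sigma> w"
  shows "graph_iso V E ({0..n} \<times> (UNIV :: bool set)) crown_adj"
proof -
  define \<phi> where "\<phi> v = (if v \<in> P then (g v, True) else (g (\<sigma> v), False))" for v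
  define h where "h = the_inv_into P g"
  have g_inj: "inj_on g P" and g_P: "g ` P = {0..n}"
    using g unfolding bij_betw_def by auto
  have h: "h i \<in> P" "g (h i) = i" if "i \<in> {0..n}" for i
    using that g_P g_inj unfolding h_def by (auto intro: the_inv_into_into f_the_inv_into_f)
  have h_V: "h i \<in> V" if "i \<in> {0..n}" for i
    using h(1)[OF that] \<open>P \<subseteq> V\<close> by blast
  have h_g: "h (g v) = v" if "v \<in> P" for v
    using that g_inj unfolding h_def by (simp add: the_inv_into_f_f)
  have "bij_betw \<phi> V ({0..n} \<times> UNIV)"
  proof (rule bij_betwI[where g = "\<lambda>(i, s). if s then h i else \<sigma> (h i)"])
    have "g v \<in> {0..n}" if "v \<in> P" for v using that g_P by blast
    then show "\<phi> \<in> V \<rightarrow> {0..n} \<times> UNIV"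
      using \<sigma>_P unfolding \<phi>_def by auto
    show "(\<lambda>(i, s). if s then h i else \<sigma> (h i)) \<in> {0..n} \<times> UNIV \<rightarrow> V"
      using h_V \<sigma>_V by auto
    show "(\<lambda>(i, s). if s then h i else \<sigma> (h i)) (\<phi> v) = v" if "v \<in> V" for v
      using that h_g \<sigma>_\<sigma> \<sigma>_P unfolding \<phi>_def by auto
    show "\<phi> ((\<lambda>(i, s). if s then h i else \<sigma> (h i)) p) = p" if "p \<in> {0..n} \<times> UNIV" for p
      using that h h_V \<sigma>_\<sigma> \<sigma>_P unfolding \<phi>_def by (auto split: prod.splits)
  qed
  moreover have "E u w \<longleftrightarrow> crown_adj (\<phi> u) (\<phi> w)" if "u \<in> V" "w \<in> V" for u w
  proof -
    have "\<sigma> u = w \<longleftrightarrow> u = \<sigma> w" using \<sigma>_\<sigma> that by auto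
    then show ?thesis
      using adj[OF that] that \<sigma>_P \<sigma>_V inj_on_eq_iff[OF g_inj]
      unfolding crown_adj_def \<phi>_def by auto
  qed
  ultimately show ?thesis unfolding graph_iso_def by blast
qed

section \<open>Distance-regular graphs with \<open>\<theta>\<^sub>1 \<le> 1\<close>\<close>

text \<open>Since the eigenvalues are ordered decreasingly with \<open>\<theta>\<^sub>0 = k\<close>, the condition \<open>\<theta>\<^sub>1 \<le> 1\<close>
  says exactly that every eigenvalue other than k is at most 1.\<close>

locale drg_theta1_le_1 = distance_regular_graph +
  assumes nontrivial_eigenvalue_le_1: "adj_eigenvalue V E l \<Longrightarrow> l = real k \<or> l \<le> 1"
begin

lemma adj_form_le_sum_squares: "(\<Sum>u\<in>V. g u) = 0 \<Longrightarrow> adj_form g g \<le> (\<Sum>u\<in>V. (g u)\<^sup>2)"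
  using adj_form_le_if_nontrivial_eigenvalues_le[OF nontrivial_eigenvalue_le_1, of g] by simp

lemma test_vector_bound:
  assumes "x \<in> V" "y \<in> V" "d x y = 3"
  shows "2 * real k ^ 2 - 2 * real k
           + (\<Sum>u\<in>nbhd x. real (card (nbhd u \<inter> nbhd x))) + (\<Sum>u\<in>nbhd y. real (card (nbhd u \<inter> nbhd y)))
         \<le> 2 * real (c 2 * c 3)"
  using adj_form_le_sum_squares[OF sum_test_vector[OF assms]]
  unfolding adj_form_test_vector[OF assms] sum_squares_test_vector[OF assms] by simp

text \<open>Since \<open>c\<^sub>2 + b\<^sub>2 \<le> k\<close>, \<open>b\<^sub>2 \<ge> 1\<close> and \<open>c\<^sub>3 \<le> k\<close>, we have \<open>c\<^sub>2 c\<^sub>3 \<le> k (k - 1)\<close>; the test vector bound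
  forces equality everywhere, including the absence of edges inside the neighbourhood of x.\<close>

lemma intersection_numbers_of_dist_3:
  assumes k3: "3 \<le> k" and xV: "x \<in> V" and yV: "y \<in> V" and dxy: "d x y = 3"
  shows "c 2 = k - 1" "c 3 = k" "b 2 = 1" "E x u \<Longrightarrow> E x v \<Longrightarrow> \<not> E u v"
proof -
  obtain c3_le: "c 3 \<le> k" and b2_pos: "1 \<le> b 2" and "c 2 + b 2 \<le> k"
    using intersection_number_bounds_dist_3[OF xV yV dxy] by blast
  then have "c 2 * c 3 \<le> (k - 1) * k"
    using b2_pos c3_le by (intro mult_le_mono) auto
  then have "real (c 2 * c 3) \<le> real ((k - 1) * k)"
    by (simp only: of_nat_le_iff)
  moreover have k_k1: "real ((k - 1) * k) = real k ^ 2 - real k"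
    using k3 by (simp add: of_nat_diff power2_eq_square algebra_simps)
  ultimately have upper: "real (c 2 * c 3) \<le> real k ^ 2 - real k" by simp
  define Px where "Px = (\<Sum>u\<in>nbhd x. real (card (nbhd u \<inter> nbhd x)))"
  define Py where "Py = (\<Sum>u\<in>nbhd y. real (card (nbhd u \<inter> nbhd y)))"
  have "Px \<ge> 0" "Py \<ge> 0" unfolding Px_def Py_def by (auto intro: sum_nonneg)
  with test_vector_bound[OF xV yV dxy] upper
  have "Px = 0" and lower: "real k ^ 2 - real k \<le> real (c 2 * c 3)"
    unfolding Px_def Py_def by linarith+
  have lower': "(k - 1) * k \<le> c 2 * c 3"
    using lower unfolding k_k1[symmetric] by (simp only: of_nat_le_iff)
  show c2: "c 2 = k - 1"
  proof (rule ccontr)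
    assume "c 2 \<noteq> k - 1"
    then have "c 2 * c 3 \<le> (k - 2) * k"
      using \<open>c 2 + b 2 \<le> k\<close> b2_pos c3_le by (intro mult_le_mono) auto
    moreover have "(k - 2) * k < (k - 1) * k" using k3 by (intro mult_less_mono1) auto
    ultimately show False using lower' by linarith
  qed
  show "c 3 = k"
  proof (rule ccontr)
    assume "c 3 \<noteq> k"
    then have "(k - 1) * c 3 < (k - 1) * k" using c3_le k3 by (intro mult_less_mono2) auto
    then show False using lower' c2 by (simp add: mult.commute)
  qed
  show "b 2 = 1" using \<open>c 2 + b 2 \<le> k\<close> b2_pos c2 k3 by linarith
  assume xu: "E x u" and xv: "E x v"
  have "card (nbhd u \<inter> nbhd x) = 0"
    using \<open>Px = 0\<close> xu edge_in_V sum_nonneg_eq_0_iff[OF finite_nbhd[of x], of "\<lambda>u. real (card (nbhd u \<inter> nbhd x))"]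
    unfolding Px_def nbhd_def by auto
  then have "nbhd u \<inter> nbhd x = {}" using finite_nbhd by simp
  then show "\<not> E u v" using xv edge_in_V unfolding nbhd_def by auto
qed

context
  assumes valency_ge_3: "3 \<le> k" and diameter_ge_3: "3 \<le> diameter V E"
begin

lemma exists_dist_3_pair: obtains x y where "x \<in> V" "y \<in> V" "d x y = 3"
proof -
  obtain x z where "x \<in> V" "z \<in> V" "d x z = diameter V E"
    using diameter_attained by blast
  then show thesis using that gdist_intermediate[of x z 3] diameter_ge_3 by auto
qed

lemma c2_eq: "c 2 = k - 1" and c3_eq: "c 3 = k" and b2_eq: "b 2 = 1"
proof -
  obtain x y where "x \<in> V" "y \<in> V" "d x y = 3" by (rule exists_dist_3_pair)
  from intersection_numbers_of_dist_3[OF valency_ge_3 this]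
  show "c 2 = k - 1" "c 3 = k" "b 2 = 1" by auto
qed

lemma b1_pos: "1 \<le> b 1"
proof -
  obtain x y where xy: "x \<in> V" "y \<in> V" "d x y = 3" by (rule exists_dist_3_pair)
  have "d x y = Suc 2" using xy by simp
  then obtain w2 where w2: "E y w2" "d x w2 = 2"
    using gdist_predecessor[OF xy(1,2)] by blast
  have w2V: "w2 \<in> V" using w2(1) edge_in_V by blast
  have "d x w2 = Suc 1" using w2(2) by simp
  then obtain w1 where w1: "E w2 w1" "d x w1 = 1"
    using gdist_predecessor[OF xy(1) w2V] by blast
  have w1V: "w1 \<in> V" using w1(1) edge_in_V by blast
  show ?thesis
    using b_pos_if_farther_neighbour[OF xy(1) w1V edge_sym[OF w1(1)]] w1(2) w2(2) by simp
qed

lemma exists_dist_3_from: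
  assumes "u \<in> V"
  obtains y where "y \<in> V" "d u y = 3"
proof -
  have "1 \<le> b (d u u)" using valency_ge_3 by simp
  then obtain y1 where y1: "y1 \<in> V" "d u y1 = 1"
    using farther_neighbour_exists[OF assms assms] by auto
  then have "1 \<le> b (d u y1)" using b1_pos by simp
  then obtain y2 where y2: "y2 \<in> V" "d u y2 = d u y1 + 1"
    using farther_neighbour_exists[OF assms y1(1)] by blast
  have "d u y2 = 2" using y1(2) y2(2) by simp
  then have "1 \<le> b (d u y2)" using b2_eq by simp
  then obtain y3 where "y3 \<in> V" "d u y3 = d u y2 + 1"
    using farther_neighbour_exists[OF assms y2(1)] by blast
  then show thesis using that \<open>d u y2 = 2\<close> by simp
qed

lemma triangle_free:
  assumes "E u v" "E u w"
  shows "\<not> E v w"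
proof -
  have "u \<in> V" using assms(1) edge_in_V by blast
  then obtain y where "y \<in> V" "d u y = 3" by (rule exists_dist_3_from)
  from intersection_numbers_of_dist_3(4)[OF valency_ge_3 \<open>u \<in> V\<close> this assms] show ?thesis .
qed

lemma same_layer_neighbours_empty:
  assumes "x \<in> V" "w \<in> V" "d x w = 2 \<or> d x w = 3"
  shows "{z\<in>V. E w z \<and> d x z = d x w} = {}"
proof -
  have "k \<le> c (d x w) + b (d x w)" using assms(3) c2_eq b2_eq c3_eq valency_ge_3 by auto
  then have "card {z\<in>V. E w z \<and> d x z = d x w} = 0"
    using intersection_numbers_sum[OF assms(1,2)] assms(3) by auto
  then show ?thesis using finite_V by simp
qed

lemma b3_eq_0: "b 3 = 0"
proof -
  obtain x y where "x \<in> V" "y \<in> V" "d x y = 3" by (rule exists_dist_3_pair)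
  then show ?thesis using intersection_numbers_sum[of x y] c3_eq by simp
qed

lemma gdist_le_3:
  assumes "x \<in> V" "z \<in> V"
  shows "d x z \<le> 3"
proof (rule ccontr)
  assume "\<not> d x z \<le> 3"
  then obtain z4 where "z4 \<in> V" "d x z4 = Suc 3"
    using gdist_intermediate[OF assms, of 4] by auto
  then obtain v where "E z4 v" "d x v = 3"
    using gdist_predecessor[OF assms(1)] by blast
  then have "1 \<le> b 3"
    using b_pos_if_farther_neighbour[OF assms(1) _ edge_sym] \<open>d x z4 = Suc 3\<close> edge_in_V by force
  then show False using b3_eq_0 by simp
qed

lemma gdist_edge_neq:
  assumes "x \<in> V" "E u w"
  shows "d x u \<noteq> d x w"
proof
  assume eq: "d x u = d x w"
  have V: "u \<in> V" "w \<in> V" using assms(2) edge_in_V by auto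
  consider "d x u = 0" | "d x u = 1" | "d x u = 2 \<or> d x u = 3"
    using gdist_le_3[OF assms(1) V(1)] by linarith
  then show False
  proof cases
    case 1
    then show False using eq assms gdist_eq_0_iff[OF assms(1)] V edge_irrefl by auto
  next
    case 2
    then show False using eq assms triangle_free gdist_eq_1_iff[OF assms(1)] V by metis
  next
    case 3
    then show False using same_layer_neighbours_empty[OF assms(1) V(1)] eq assms(2) V(2) by auto
  qed
qed

lemma odd_gdist_edge:
  assumes "x \<in> V" "E u w"
  shows "odd (d x u + d x w)"
proof -
  have "d x w \<le> d x u + 1" "d x u \<le> d x w + 1"
    using gdist_edge_le[OF assms(1)] assms(2) edge_sym by blast+
  then have "d x w = d x u + 1 \<or> d x u = d x w + 1"
    using gdist_edge_neq[OF assms] by linarith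
  then show ?thesis by auto
qed

lemma even_gdist_walk: "walk E u w n \<Longrightarrow> x \<in> V \<Longrightarrow> even (d x u + d x w + n)"
proof (induction n arbitrary: u)
  case (Suc n)
  then obtain z where "E u z" "walk E z w n" by auto
  have "even (d x z + d x w + n)" using Suc.IH[OF \<open>walk E z w n\<close> Suc.prems(2)] .
  moreover have "odd (d x u + d x z)" using odd_gdist_edge[OF Suc.prems(2) \<open>E u z\<close>] .
  ultimately show ?case by auto
qed simp

lemma even_gdist_triangle: "x \<in> V \<Longrightarrow> u \<in> V \<Longrightarrow> w \<in> V \<Longrightarrow> even (d x u + d x w + d u w)"
  using even_gdist_walk walk_gdist by blast

lemma card_layer_2: "x \<in> V \<Longrightarrow> card (layer x 2) = k"
  and card_layer_3: "x \<in> V \<Longrightarrow> card (layer x 3) = 1"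
proof -
  assume xV: "x \<in> V"
  have "layer x 1 = nbhd x" unfolding layer_def nbhd_def using gdist_eq_1_iff[OF xV] by auto
  then have L1: "card (layer x 1) = k" using card_nbhd[OF xV] by simp
  have "nbhd x \<noteq> {}" using card_nbhd[OF xV] valency_ge_3 by auto
  then obtain u where "u \<in> nbhd x" by blast
  then have u: "u \<in> V" "E x u" "d x u = 1" using gdist_eq_1_iff[OF xV] unfolding nbhd_def by auto
  have no_same_layer: "{z\<in>V. E u z \<and> d x z = d x u} = {}" using gdist_edge_neq[OF xV] by fastforce
  from intersection_numbers_sum[OF xV u(1)] have "c 1 + b 1 = k"
    unfolding no_same_layer by (simp add: u(3))
  then have b1: "b 1 = k - 1" using c1_eq[OF u(2)] by simp
  have "k * (k - 1) = card (layer x 2) * (k - 1)"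
    using card_layer_mult_b[OF xV, of 1] L1 b1 c2_eq by (simp add: numeral_2_eq_2)
  then show L2: "card (layer x 2) = k" using valency_ge_3 by simp
  have "k = card (layer x 3) * k"
    using card_layer_mult_b[OF xV, of 2] L2 b2_eq c3_eq by (simp add: numeral_3_eq_3)
  then show "card (layer x 3) = 1" using valency_ge_3 by simp
qed

definition antipode :: "'a \<Rightarrow> 'a" where
  "antipode v = the_elem (layer v 3)"

lemma layer_3_eq_antipode: "v \<in> V \<Longrightarrow> layer v 3 = {antipode v}"
  unfolding antipode_def using card_layer_3 by (metis card_1_singletonE the_elem_eq)

lemma antipode: "v \<in> V \<Longrightarrow> antipode v \<in> V \<and> d v (antipode v) = 3"
  and antipode_unique: "v \<in> V \<Longrightarrow> y \<in> V \<Longrightarrow> d v y = 3 \<Longrightarrow> y = antipode v"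
  using layer_3_eq_antipode unfolding layer_def by blast+

lemma antipode_antipode: "v \<in> V \<Longrightarrow> antipode (antipode v) = v"
  using antipode antipode_unique gdist_sym by metis

lemma even_gdist_antipode_iff: "x \<in> V \<Longrightarrow> v \<in> V \<Longrightarrow> even (d x (antipode v)) \<longleftrightarrow> odd (d x v)"
  using even_gdist_triangle[of x v "antipode v"] antipode by auto

lemma adjacent_iff_opposite_parity:
  assumes "x \<in> V" "u \<in> V" "w \<in> V"
  shows "E u w \<longleftrightarrow> (even (d x u) \<longleftrightarrow> odd (d x w)) \<and> u \<noteq> antipode w"
proof (cases "even (d x u) \<longleftrightarrow> odd (d x w)")
  case True
  then have "odd (d u w)" using even_gdist_triangle[OF assms] by auto
  moreover have "d u w \<le> 3" using gdist_le_3[OF assms(2,3)] .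
  moreover have "odd n \<Longrightarrow> n \<le> 3 \<Longrightarrow> n = 1 \<or> n = 3" for n :: nat by presburger
  ultimately have "d u w = 1 \<or> d u w = 3" by blast
  moreover have "u = antipode w \<longleftrightarrow> d u w = 3"
    using antipode antipode_unique gdist_sym assms(2,3) by metis
  ultimately show ?thesis using True gdist_eq_1_iff[OF assms(2,3)] by auto
next
  case False
  then show ?thesis using odd_gdist_edge[OF assms(1)] by auto
qed

lemma card_even_part: "x \<in> V \<Longrightarrow> card {v\<in>V. even (d x v)} = k + 1"
proof -
  assume xV: "x \<in> V"
  have "{v\<in>V. even (d x v)} = insert x (layer x 2)"
  proof -
    have "n \<le> 3 \<Longrightarrow> even n \<Longrightarrow> n = 0 \<or> n = 2" for n :: nat by presburger
    then have "d x v = 0 \<or> d x v = 2" if "v \<in> V" "even (d x v)" for v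
      using gdist_le_3[OF xV that(1)] that(2) by blast
    then show ?thesis unfolding layer_def using xV gdist_eq_0_iff[OF xV] by auto
  qed
  moreover have "x \<notin> layer x 2" unfolding layer_def by simp
  ultimately show ?thesis using card_layer_2[OF xV] finite_layer by simp
qed

lemma graph_iso_crown: "graph_iso V E ({0..k} \<times> (UNIV :: bool set)) crown_adj"
proof -
  obtain x where xV: "x \<in> V" using V_nonempty by blast
  let ?P = "{v\<in>V. even (d x v)}"
  obtain g where "bij_betw g ?P {0..k}"
    using finite_same_card_bij[of ?P "{0..k}"] card_even_part[OF xV] finite_V by auto
  then show ?thesis
    by (rule graph_iso_crown_adjI[where \<sigma> = antipode])
       (use antipode antipode_antipode even_gdist_antipode_iff[OF xV]
          adjacent_iff_opposite_parity[OF xV] in auto)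
qed

lemma diameter_eq_3: "diameter V E = 3"
  using diameter_attained gdist_le_3 diameter_ge_3 by (metis le_antisym)

end

end

lemma le_first_if_strictly_decreasing:
  fixes \<theta> :: "nat \<Rightarrow> real"
  assumes "\<forall>i<D. \<theta> (Suc i) < \<theta> i" "1 \<le> i" "i \<le> D"
  shows "\<theta> i \<le> \<theta> 1"
  using assms(2,3)
proof (induction i rule: dec_induct)
  case (step n)
  then have "\<theta> n \<le> \<theta> 1" by simp
  moreover have "\<theta> (Suc n) < \<theta> n" using assms(1) step.prems by simp
  ultimately show ?case by simp
qed simp

theorem theorem4p1:
  fixes V :: "'a set" and E :: "'a \<Rightarrow> 'a \<Rightarrow> bool"
    and b c :: "nat \<Rightarrow> nat" and k D :: nat and \<theta> :: "nat \<Rightarrow> real"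
  assumes "distance_regular V E b c"
    and "k = b 0" and "k \<ge> 3"
    and "D = diameter V E" and "D \<ge> 3"
    and "\<forall>i<D. \<theta> (Suc i) < \<theta> i"
    and "{t. adj_eigenvalue V E t} = \<theta> ` {0..D}"
    and "\<theta> 0 = real k"
    and "\<theta> 1 \<le> 1"
  shows "D = 3 \<and> graph_iso V E ({0..k} \<times> (UNIV :: bool set)) crown_adj"
proof -
  interpret drg_theta1_le_1 V E b c
  proof unfold_locales
    show "distance_regular V E b c" by fact
    fix l assume "adj_eigenvalue V E l"
    then have "l \<in> \<theta> ` {0..D}" using assms(7) by blast
    then obtain i where "i \<le> D" "l = \<theta> i" by auto
    then show "l = real (b 0) \<or> l \<le> 1"
      using le_first_if_strictly_decreasing[OF assms(6), of i] assms(2,8,9)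
      by (cases "i = 0") auto
  qed
  have "3 \<le> b 0" "3 \<le> diameter V E" using assms(2-5) by auto
  then show ?thesis
    using diameter_eq_3 graph_iso_crown assms(2,4) by simp
qed

end
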